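(* In the setting below, let $y^*\in\mathbb{R}^m_+$ be a dual optimal solution, i.e. $(x^*,y^* )$ satisfies the KKT condition, and let $\hat x\in\mathcal{X}$ and $\beta>0$. 1. If $\|\hat x-x^*\|^2\le 2\beta$, then $\|y^*\|_1\ge h_1(\hat x,\beta):=r\big[\|\nabla G(\hat x)\|+L_X\sqrt{2\beta}\big]^{-1}$. 2. If $(y^* )^\top\mu\cdot\|\hat x-x^*\|^2\le 2\beta$, then $$\|y^*\|_1\ge h_2(\hat x,\beta):=\Big[\tfrac{L_X}{r}\sqrt{\tfrac{\beta}{2\underline{\mu}}}+\sqrt{\tfrac{L_X^2\beta}{2\underline{\mu}r^2}+\tfrac{\|\nabla G(\hat x)\|}{r}}\Big]^{-2}.$$
   Context: Problem: $\min_{x\in\mathbb{R}^n}f(x)$ s.t. $g_i(x)\le0$, $i=1,\dots,m$; $f$ convex, continuous, bounded below; each $g_i$ differentiable and $\mu_i$-strongly convex ($\mu_i>0$). $G(x)=(g_1(x),\dots,g_m(x))^\top$, $\nabla G(x)=[\nabla g_1(x),\dots,\nabla g_m(x)]\in\mathbb{R}^{n\times m}$, $\mu=(\mu_1,\dots,\mu_m)^\top$, $\underline{\mu}=\min_i\mu_i$; $\|\cdot\|$ is the Euclidean norm and the induced operator norm on matrices. KKT: $y^*\ge0$, $0\in\partial f(x^* )+\nabla G(x^* )y^*$, $\langle y^*,G(x^* )\rangle=0$. Standing assumptions: there is $\tilde x$ with $g_i(\tilde x)<0$ for all $i$; for every minimizer $x_0^*$ of $f$ some $g_i(x_0^* )>0$;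 $x^*$ is the (unique) optimal solution; $r$ is a known constant with $\min_{\xi\in\partial f(x^* )}\|\xi\|\ge r>0$. $\mathcal{X}=\mathcal{B}(\tilde x,\min_i 2\sqrt{-2g_i(x_i^* )/\mu_i})$ with $x_i^*=\arg\min g_i$. $L_X>0$ satisfies $\|\nabla G(x)-\nabla G(\bar x)\|\le L_X\|x-\bar x\|$ for all $x,\bar x\in\mathcal{X}$. *)

theory Defs
  imports "HOL-Analysis.Analysis"
begin

definition strongly_convex :: "real \<Rightarrow> ('a::real_normed_vector \<Rightarrow> real) \<Rightarrow> bool" where
  "strongly_convex \<mu> g \<longleftrightarrow> (\<forall>x y t. 0 \<le> t \<and> t \<le> 1 \<longrightarrow>
     g (t *\<^sub>R x + (1 - t) *\<^sub>R y) \<le> t * g x + (1 - t) * g y - \<mu> / 2 * t * (1 - t) * (norm (x - y))\<^sup>2)"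

definition subdiff :: "('a::real_inner \<Rightarrow> real) \<Rightarrow> 'a \<Rightarrow> 'a set" where
  "subdiff f x = {\<xi>. \<forall>z. f z \<ge> f x + \<xi> \<bullet> (z - x)}"

text \<open>The n x m matrix nabla G(x) = [nabla g_1(x), ..., nabla g_m(x)] built from the gradients dg.\<close>
definition gradG :: "('m \<Rightarrow> real^'n \<Rightarrow> real^'n) \<Rightarrow> real^'n \<Rightarrow> real^'m^'n" where
  "gradG dg x = (\<chi> j k. dg k x $ j)"

definition opnorm :: "real^'m^'n \<Rightarrow> real" where
  "opnorm A = onorm (\<lambda>v. A *v v)"

definition norm1 :: "real^'m \<Rightarrow> real" where
  "norm1 y = (\<Sum>i\<in>UNIV. \<bar>y $ i\<bar>)"

end

theory Submission
  imports Defs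
begin

text \<open>
  Stationarity gives r <= |xi| = |nabla G(x*) y*| <= |nabla G(x*)| |y*|_1. Strong convexity of the
  constraints confines every feasible point, in particular x*, to the ball X around the Slater
  point, so the Lipschitz bound on nabla G yields r <= (|nabla G(x_hat)| + L_X delta) |y*|_1 with
  delta = |x_hat - x*|. The first bound follows from delta <= sqrt(2 beta). For the second,
  mu_min |y*|_1 delta^2 <= 2 beta turns this into a quadratic inequality in v = |y*|_1^(-1/2),
  and h_2 is the inverse square of its larger root.
\<close>

lemma strongly_convex_quadratic_growth:
  assumes sc: "strongly_convex \<mu> g" and min: "\<And>z. g xmin \<le> g z" and "\<mu> > 0"
  shows "\<mu> / 2 * (norm (z - xmin))\<^sup>2 \<le> g z - g xmin"
proof (rule ccontr)
  define a where "a = \<mu> / 2 * (norm (z - xmin))\<^sup>2"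
  define c where "c = g z - g xmin"
  assume "\<not> ?thesis"
  hence "c < a" unfolding a_def c_def by simp
  moreover have "c \<ge> 0" using min unfolding c_def by auto
  ultimately have "a > 0" by simp
  \<comment> \<open>strong convexity at this point of the segment from \<open>xmin\<close> to \<open>z\<close> contradicts minimality\<close>
  define t where "t = (a - c) / (2 * a)"
  have t: "0 < t" "t \<le> 1" using \<open>c < a\<close> \<open>c \<ge> 0\<close> unfolding t_def by (auto simp: field_simps)
  have "g xmin \<le> g (t *\<^sub>R z + (1 - t) *\<^sub>R xmin)" by (rule min)
  also have "\<dots> \<le> t * g z + (1 - t) * g xmin - \<mu> / 2 * t * (1 - t) * (norm (z - xmin))\<^sup>2"
    using sc t unfolding strongly_convex_def by simp
  finally have "t * ((1 - t) * a) \<le> t * c" unfolding a_def c_def by (simp add: algebra_simps)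
  hence "(1 - t) * a \<le> c" using t by simp
  moreover have "(1 - t) * a = (a + c) / 2" using \<open>a > 0\<close> unfolding t_def by (simp add: field_simps)
  ultimately show False using \<open>c < a\<close> by simp
qed

lemma strongly_convex_dist_minimizer_le:
  assumes "strongly_convex \<mu> g" and "\<And>z. g xmin \<le> g z" and "\<mu> > 0"
  shows "norm (z - xmin) \<le> sqrt (2 * (g z - g xmin) / \<mu>)"
  using strongly_convex_quadratic_growth[OF assms, of z] \<open>\<mu> > 0\<close>
  by (intro real_le_rsqrt) (simp add: field_simps)

lemma feasible_in_slater_ball:
  fixes g :: "'m::finite \<Rightarrow> 'a::real_normed_vector \<Rightarrow> real"
  assumes sc: "\<And>i. strongly_convex (\<mu> i) (g i)" and mu_pos: "\<And>i. \<mu> i > 0"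
    and min: "\<And>i z. g i (xs i) \<le> g i z"
    and slater: "\<And>i. g i xt < 0" and feasible: "\<And>i. g i x \<le> 0"
  shows "x \<in> ball xt (Min (range (\<lambda>i. 2 * sqrt (- 2 * g i (xs i) / \<mu> i))))"
proof -
  have "dist xt x < 2 * sqrt (- 2 * g i (xs i) / \<mu> i)" for i
  proof -
    have "norm (xt - xs i) < sqrt (- 2 * g i (xs i) / \<mu> i)"
      using strongly_convex_dist_minimizer_le[OF sc[of i] min[of i] mu_pos[of i], of xt] slater[of i] mu_pos[of i]
      by (smt (verit) divide_strict_right_mono real_sqrt_less_mono)
    moreover have "norm (x - xs i) \<le> sqrt (- 2 * g i (xs i) / \<mu> i)"
      using strongly_convex_dist_minimizer_le[OF sc[of i] min[of i] mu_pos[of i], of x] feasible[of i] mu_pos[of i]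
      by (smt (verit) divide_right_mono real_sqrt_le_mono)
    moreover have "dist xt x \<le> norm (xt - xs i) + norm (x - xs i)"
      using norm_triangle_ineq4[of "xt - xs i" "x - xs i"] by (simp add: dist_norm)
    ultimately show ?thesis by simp
  qed
  thus ?thesis by (simp add: Min_gr_iff)
qed

lemma opnorm_nonneg: "opnorm A \<ge> 0"
  unfolding opnorm_def by (rule onorm_pos_le) auto

lemma norm_matrix_vector_mult_le: "norm (A *v y) \<le> opnorm A * norm y"
  unfolding opnorm_def by (rule onorm) auto

lemma opnorm_le_opnorm_add_diff: "opnorm A \<le> opnorm B + opnorm (A - B)"
proof -
  have "(\<lambda>v. A *v v) = (\<lambda>v. B *v v + (A - B) *v v)"
    by (simp add: matrix_vector_mult_diff_rdistrib)
  thus ?thesis unfolding opnorm_def by (metis onorm_triangle matrix_vector_mul_bounded_linear)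
qed

lemma norm_le_norm1: "norm y \<le> norm1 y"
  unfolding norm1_def by (rule norm_le_l1_cart)

lemma norm1_nonneg: "norm1 y \<ge> 0"
  using norm_ge_zero norm_le_norm1 by (rule order_trans)

lemma stationarity_norm1_lower_bound:
  assumes "r \<le> norm \<xi>" and "\<xi> + A *v y = 0" and "opnorm (A - B) \<le> L * \<delta>"
  shows "r \<le> (opnorm B + L * \<delta>) * norm1 y"
proof -
  have "\<xi> = - (A *v y)" using assms(2) by (simp add: eq_neg_iff_add_eq_0)
  hence "r \<le> norm (A *v y)" using assms(1) by simp
  also have "\<dots> \<le> opnorm A * norm y" by (rule norm_matrix_vector_mult_le)
  also have "\<dots> \<le> opnorm A * norm1 y" by (intro mult_left_mono norm_le_norm1 opnorm_nonneg)
  also have "opnorm A \<le> opnorm B + opnorm (A - B)" by (rule opnorm_le_opnorm_add_diff)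
  also have "\<dots> \<le> opnorm B + L * \<delta>" using assms(3) by simp
  finally show ?thesis using norm1_nonneg[of y] by (simp add: mult_right_mono)
qed

lemma Min_mult_norm1_le_weighted_sum:
  fixes y :: "real^'m::finite"
  assumes "\<And>i. y $ i \<ge> 0"
  shows "Min (range \<mu>) * norm1 y \<le> (\<Sum>i\<in>UNIV. y $ i * \<mu> i)"
proof -
  have "Min (range \<mu>) * norm1 y = (\<Sum>i\<in>UNIV. y $ i * Min (range \<mu>))"
    unfolding norm1_def using assms by (simp add: sum_distrib_right mult.commute)
  also have "\<dots> \<le> (\<Sum>i\<in>UNIV. y $ i * \<mu> i)"
    by (intro sum_mono mult_left_mono Min_le assms) auto
  finally show ?thesis .
qed

lemma lower_bound_of_distance_le:
  fixes r L a \<delta> s N :: real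
  assumes "r \<le> (a + L * \<delta>) * N" and "\<delta> \<le> s" and "L > 0" and "N \<ge> 0" and "a + L * s > 0"
  shows "r / (a + L * s) \<le> N"
proof -
  have "(a + L * \<delta>) * N \<le> (a + L * s) * N"
    using assms(2-4) by (intro mult_right_mono add_left_mono mult_left_mono) auto
  with assms(1,5) show ?thesis by (simp add: divide_le_eq mult.commute)
qed

lemma le_larger_root:
  fixes v p c :: real
  assumes "v\<^sup>2 \<le> c + 2 * p * v"
  shows "v \<le> p + sqrt (p\<^sup>2 + c)"
proof -
  have "(v - p)\<^sup>2 \<le> p\<^sup>2 + c" using assms by (simp add: power2_eq_square algebra_simps)
  hence "\<bar>v - p\<bar> \<le> sqrt (p\<^sup>2 + c)" by (metis real_sqrt_abs real_sqrt_le_mono)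
  thus ?thesis by simp
qed

lemma lower_bound_of_weighted_distance_le:
  fixes r L a \<beta> m N \<delta> :: real
  assumes pos: "r > 0" "L > 0" "\<beta> > 0" "m > 0" and "a \<ge> 0" "\<delta> \<ge> 0"
    and key: "r \<le> (a + L * \<delta>) * N" and weighted: "m * N * \<delta>\<^sup>2 \<le> 2 * \<beta>"
  shows "N \<ge> (L / r * sqrt (\<beta> / (2 * m)) + sqrt (L\<^sup>2 * \<beta> / (2 * m * r\<^sup>2) + a / r)) powr (-2)"
proof -
  have "a + L * \<delta> \<ge> 0" using assms by simp
  hence "N > 0" using key pos by (metis mult_nonneg_nonpos not_le order.strict_trans1)
  define p where "p = L / r * sqrt (\<beta> / (2 * m))"
  define w where "w = p + sqrt (L\<^sup>2 * \<beta> / (2 * m * r\<^sup>2) + a / r)"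
  define u where "u = sqrt N"
  have "u > 0" and uN: "u\<^sup>2 = N" unfolding u_def using \<open>N > 0\<close> by simp_all
  have "(\<delta> * u)\<^sup>2 \<le> (2 * sqrt (\<beta> / (2 * m)))\<^sup>2"
    using weighted \<open>N > 0\<close> pos uN by (simp add: power_mult_distrib field_simps)
  hence "\<delta> * u \<le> 2 * sqrt (\<beta> / (2 * m))"
    by (rule power2_le_imp_le) (use pos in simp)
  hence "L * \<delta> * u \<le> 2 * r * p" unfolding p_def using pos by (simp add: field_simps)
  have "r \<le> (a + L * \<delta>) * u\<^sup>2" using key uN by simp
  also have "\<dots> = a * u\<^sup>2 + (L * \<delta> * u) * u" by (simp add: algebra_simps power2_eq_square)
  also have "\<dots> \<le> a * u\<^sup>2 + (2 * r * p) * u"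
    using \<open>L * \<delta> * u \<le> 2 * r * p\<close> \<open>u > 0\<close> by (intro add_left_mono mult_right_mono) auto
  finally have "r \<le> a * u\<^sup>2 + 2 * r * p * u" .
  hence "(1 / u)\<^sup>2 \<le> a / r + 2 * p * (1 / u)"
    using \<open>u > 0\<close> pos by (simp add: field_simps power2_eq_square)
  hence "1 / u \<le> p + sqrt (p\<^sup>2 + a / r)" by (rule le_larger_root)
  also have "p\<^sup>2 = L\<^sup>2 * \<beta> / (2 * m * r\<^sup>2)"
    unfolding p_def using pos by (simp add: power_mult_distrib power_divide)
  finally have "1 / u \<le> w" unfolding w_def .
  moreover have "w > 0" unfolding w_def p_def using pos \<open>a \<ge> 0\<close> by (simp add: add_pos_nonneg)
  ultimately have "1 / N \<le> w\<^sup>2"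
    using \<open>u > 0\<close> uN by (metis power_mono power_one_over less_le zero_less_divide_1_iff)
  hence "1 / w\<^sup>2 \<le> N" using \<open>N > 0\<close> \<open>w > 0\<close> by (simp add: field_simps)
  moreover have "w powr (-2) = 1 / w\<^sup>2"
    using \<open>w > 0\<close> by (simp add: powr_minus powr_numeral divide_inverse)
  ultimately show ?thesis unfolding w_def p_def by simp
qed

theorem proposition4:
  fixes f :: "real^'n \<Rightarrow> real"
    and g :: "'m::finite \<Rightarrow> real^'n \<Rightarrow> real"
    and dg :: "'m \<Rightarrow> real^'n \<Rightarrow> real^'n"
    and \<mu> :: "'m \<Rightarrow> real"
    and xt xopt xhat :: "real^'n"
    and xs :: "'m \<Rightarrow> real^'n"
    and yopt :: "real^'m"
    and r LX \<beta> :: real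
    and X :: "(real^'n) set"
  assumes f_convex: "convex_on UNIV f"
    and f_cont: "continuous_on UNIV f"
    and f_bdd: "bdd_below (range f)"
    and g_grad: "\<And>i x. GDERIV (g i) x :> dg i x"
    and mu_pos: "\<And>i. \<mu> i > 0"
    and g_sc: "\<And>i. strongly_convex (\<mu> i) (g i)"
    and slater: "\<And>i. g i xt < 0"
    and unconstr: "\<And>x0. (\<forall>z. f x0 \<le> f z) \<Longrightarrow> \<exists>i. g i x0 > 0"
    and xopt_feas: "\<And>i. g i xopt \<le> 0"
    and xopt_opt: "\<And>x. (\<forall>i. g i x \<le> 0) \<Longrightarrow> f xopt \<le> f x"
    and xopt_unique: "\<And>x. (\<forall>i. g i x \<le> 0) \<Longrightarrow> f x \<le> f xopt \<Longrightarrow> x = xopt"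
    and r_pos: "r > 0"
    and r_bound: "\<And>\<xi>. \<xi> \<in> subdiff f xopt \<Longrightarrow> norm \<xi> \<ge> r"
    and xs_min: "\<And>i z. g i (xs i) \<le> g i z"
    and X_def: "X = ball xt (Min (range (\<lambda>i. 2 * sqrt (- 2 * g i (xs i) / \<mu> i))))"
    and LX_pos: "LX > 0"
    and LX_lip: "\<And>x x'. x \<in> X \<Longrightarrow> x' \<in> X \<Longrightarrow>
                   opnorm (gradG dg x - gradG dg x') \<le> LX * norm (x - x')"
    and kkt_nonneg: "\<And>i. yopt $ i \<ge> 0"
    and kkt_stat: "\<exists>\<xi>\<in>subdiff f xopt. \<xi> + gradG dg xopt *v yopt = 0"
    and kkt_compl: "(\<Sum>i\<in>UNIV. yopt $ i * g i xopt) = 0"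
    and xhat_X: "xhat \<in> X"
    and beta_pos: "\<beta> > 0"
  shows "((norm (xhat - xopt))\<^sup>2 \<le> 2 * \<beta> \<longrightarrow>
            norm1 yopt \<ge> r / (opnorm (gradG dg xhat) + LX * sqrt (2 * \<beta>)))
       \<and> ((\<Sum>i\<in>UNIV. yopt $ i * \<mu> i) * (norm (xhat - xopt))\<^sup>2 \<le> 2 * \<beta> \<longrightarrow>
            norm1 yopt \<ge> (LX / r * sqrt (\<beta> / (2 * Min (range \<mu>)))
               + sqrt (LX\<^sup>2 * \<beta> / (2 * Min (range \<mu>) * r\<^sup>2) + opnorm (gradG dg xhat) / r)) powr (-2))"
proof -
  define a where "a = opnorm (gradG dg xhat)"
  define \<delta> where "\<delta> = norm (xhat - xopt)"
  have "xopt \<in> X"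
    unfolding X_def by (rule feasible_in_slater_ball[OF g_sc mu_pos xs_min slater xopt_feas])
  obtain \<xi> where \<xi>: "\<xi> \<in> subdiff f xopt" "\<xi> + gradG dg xopt *v yopt = 0"
    using kkt_stat by blast
  have key: "r \<le> (a + LX * \<delta>) * norm1 yopt"
    using stationarity_norm1_lower_bound[OF r_bound[OF \<xi>(1)] \<xi>(2) LX_lip[OF \<open>xopt \<in> X\<close> xhat_X]]
    unfolding a_def \<delta>_def by (simp add: norm_minus_commute)
  have "a \<ge> 0" unfolding a_def by (rule opnorm_nonneg)
  show ?thesis
  proof (intro conjI impI)
    assume "(norm (xhat - xopt))\<^sup>2 \<le> 2 * \<beta>"
    hence "\<delta> \<le> sqrt (2 * \<beta>)" unfolding \<delta>_def by (rule real_le_rsqrt)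
    moreover have "a + LX * sqrt (2 * \<beta>) > 0"
      using \<open>a \<ge> 0\<close> LX_pos beta_pos by (simp add: add_nonneg_pos)
    ultimately show "norm1 yopt \<ge> r / (opnorm (gradG dg xhat) + LX * sqrt (2 * \<beta>))"
      using lower_bound_of_distance_le[OF key _ LX_pos norm1_nonneg] unfolding a_def by blast
  next
    assume "(\<Sum>i\<in>UNIV. yopt $ i * \<mu> i) * (norm (xhat - xopt))\<^sup>2 \<le> 2 * \<beta>"
    hence "Min (range \<mu>) * norm1 yopt * \<delta>\<^sup>2 \<le> 2 * \<beta>"
      using Min_mult_norm1_le_weighted_sum[OF kkt_nonneg, of \<mu>] unfolding \<delta>_def
      by (meson order_trans mult_right_mono zero_le_power2)
    moreover have "Min (range \<mu>) > 0" using mu_pos by (simp add: Min_gr_iff)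
    ultimately show "norm1 yopt \<ge> (LX / r * sqrt (\<beta> / (2 * Min (range \<mu>)))
               + sqrt (LX\<^sup>2 * \<beta> / (2 * Min (range \<mu>) * r\<^sup>2) + opnorm (gradG dg xhat) / r)) powr (-2)"
      using lower_bound_of_weighted_distance_le[OF r_pos LX_pos beta_pos _ \<open>a \<ge> 0\<close> _ key]
      unfolding a_def \<delta>_def by simp
  qed
qed

end
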